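(* Let $M,N\ge1$, $\gamma>0$ and let $\lambda_x,\lambda_v,\lambda_w$ be arbitrary positive constants. For arbitrary initial data, let $\{(\hat x_i(t),\hat v_i(t))\}_{i=1}^N$ be the solution of the centralized herding system \[ \frac{d\hat x_i}{dt}=\hat v_i,\qquad \frac{d\hat v_i}{dt}=\frac{\lambda_x}{N}\sum_{j=1}^N\hat\phi_{ij}(\hat x_j-\hat x_i)+\frac{\lambda_v}{N}\sum_{j=1}^N\hat\phi_{ij}(\hat v_j-\hat v_i)-\lambda_w\hat x_i,\qquad \hat\phi_{ij}=(1+|\hat x_i-\hat x_j|^2)^{-\gamma/2}, \] with $\sum_i\hat x_i(0)=\sum_i\hat v_i(0)=0$. Then $\mathcal{E}_2(t)\to0$ as $t\to\infty$.
   Context: $|\cdot|$ is the Euclidean norm on $\mathbb{R}^M$. The centralized variables are $\hat x_i=x_i-x_c$, $\hat v_i=v_i-v_c$, the deviations from the averages $x_c=\frac1N\sum_ix_i$, $v_c=\frac1N\sum_iv_i$ of a solution $(x_i,v_i)$ of the original herding model (with arbitrary initial data $x_i(0),v_i(0)$); their sums vanish for all time. Let $X=\sum_i|\hat x_i|^2$, $V=\sum_i|\hat v_i|^2$, and \[ S_\gamma=\begin{cases}\frac1N\sum_{i,j}\big\{(1+|\hat x_i-\hat x_j|^2)^{-(\gamma-2)/2}-1\big\}, & 0<\gamma<2,\\ \frac1N\sum_{i,j}\log(1+|\hat x_i-\hat x_j|^2), & \gamma=2,\\ \frac1N\sum_{i,j}\big\{1-(1+|\hat x_i-\hat x_j|^2)^{-(\gamma-2)/2}\big\},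 & \gamma>2,\end{cases} \qquad \beta_\gamma=\begin{cases}2-\gamma,&0<\gamma<2,\\2,&\gamma=2,\\\gamma-2,&\gamma>2.\end{cases} \] The herding energy is $\mathcal{E}_2(t)=\lambda_wX(t)+V(t)+\lambda_x\beta_\gamma^{-1}S_\gamma(t)$. *)

theory Defs
  imports "HOL-Analysis.Analysis"
begin

text \<open>Agents are indexed by i in {..<N}; positions/velocities live in real^'m (M = CARD('m)).\<close>

definition phi_hat :: "real \<Rightarrow> real^'m \<Rightarrow> real^'m \<Rightarrow> real" where
  "phi_hat \<gamma> xi xj = (1 + (norm (xi - xj))\<^sup>2) powr (-(\<gamma> / 2))"

definition beta_gamma :: "real \<Rightarrow> real" where
  "beta_gamma \<gamma> = (if \<gamma> < 2 then 2 - \<gamma> else if \<gamma> = 2 then 2 else \<gamma> - 2)"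

definition S_gamma :: "real \<Rightarrow> nat \<Rightarrow> (nat \<Rightarrow> real^'m) \<Rightarrow> real" where
  "S_gamma \<gamma> N x =
     (if \<gamma> < 2 then (1 / real N) * (\<Sum>i<N. \<Sum>j<N.
          (1 + (norm (x i - x j))\<^sup>2) powr (-(\<gamma> - 2) / 2) - 1)
      else if \<gamma> = 2 then (1 / real N) * (\<Sum>i<N. \<Sum>j<N. ln (1 + (norm (x i - x j))\<^sup>2))
      else (1 / real N) * (\<Sum>i<N. \<Sum>j<N.
          1 - (1 + (norm (x i - x j))\<^sup>2) powr (-(\<gamma> - 2) / 2)))"

definition X_of :: "nat \<Rightarrow> (nat \<Rightarrow> real^'m) \<Rightarrow> real" where
  "X_of N x = (\<Sum>i<N. (norm (x i))\<^sup>2)"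

definition herding_energy ::
  "real \<Rightarrow> real \<Rightarrow> real \<Rightarrow> nat \<Rightarrow> (nat \<Rightarrow> real^'m) \<Rightarrow> (nat \<Rightarrow> real^'m) \<Rightarrow> real" where
  "herding_energy lw lx \<gamma> N x v =
     lw * X_of N x + X_of N v + lx / beta_gamma \<gamma> * S_gamma \<gamma> N x"

end

theory Submission
  imports Defs
begin

(* The energy dissipates at rate (lv/N) * sum phi_ij |v_j - v_i|^2, and both centres of mass stay at 0.
   Hence the energy bounds all pairwise distances, so the weights phi_ij stay above a fixed m > 0.
   With this, the perturbed functional E + eps * sum x_i . v_i is comparable to E and its derivative is
   at most -c E for small eps, so E decays exponentially. *)

(* Half the primitive of (1 + u) powr (-g/2) vanishing at 0; the three cases of S_gamma / beta_gamma
   are exactly its three closed forms. *)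
definition herding_potential :: "real \<Rightarrow> real \<Rightarrow> real" where
  "herding_potential g u =
     (if g < 2 then ((1 + u) powr ((2 - g) / 2) - 1) / (2 - g)
      else if g = 2 then ln (1 + u) / 2
      else (1 - (1 + u) powr (-(g - 2) / 2)) / (g - 2))"

lemma herding_potential_zero [simp]: "herding_potential g 0 = 0"
  by (simp add: herding_potential_def)

lemma herding_potential_has_derivative:
  assumes "u > -1"
  shows "(herding_potential g has_real_derivative (1 + u) powr (-(g / 2)) / 2) (at u)"
proof -
  have u: "1 + u > 0" using assms by simp
  consider "g < 2" | "g = 2" | "g > 2" by linarith
  then show ?thesis
  proof cases
    case 1
    then have "herding_potential g = (\<lambda>u. ((1 + u) powr ((2 - g) / 2) - 1) / (2 - g))"
      by (auto simp: herding_potential_def fun_eq_iff)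
    moreover have "((\<lambda>u. ((1 + u) powr ((2 - g) / 2) - 1) / (2 - g)) has_real_derivative
        ((2 - g) / 2 * (1 + u) powr ((2 - g) / 2 - 1) * 1) / (2 - g)) (at u)"
      using u 1 by (auto intro!: derivative_eq_intros)
    moreover have "((2 - g) / 2 * (1 + u) powr ((2 - g) / 2 - 1) * 1) / (2 - g) = (1 + u) powr (-(g / 2)) / 2"
      using 1 by (simp add: field_simps)
    ultimately show ?thesis by metis
  next
    case 2
    then have "herding_potential g = (\<lambda>u. ln (1 + u) / 2)"
      by (auto simp: herding_potential_def fun_eq_iff)
    moreover have "((\<lambda>u. ln (1 + u) / 2) has_real_derivative (1 / (1 + u)) / 2) (at u)"
      using u by (auto intro!: derivative_eq_intros simp: field_simps)
    ultimately show ?thesis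
      using 2 u by (simp add: powr_minus_divide)
  next
    case 3
    then have "herding_potential g = (\<lambda>u. (1 - (1 + u) powr (-(g - 2) / 2)) / (g - 2))"
      by (auto simp: herding_potential_def fun_eq_iff)
    moreover have "((\<lambda>u. (1 - (1 + u) powr (-(g - 2) / 2)) / (g - 2)) has_real_derivative
        (0 - (-(g - 2) / 2) * (1 + u) powr (-(g - 2) / 2 - 1) * 1) / (g - 2)) (at u)"
      using u 3 by (auto intro!: derivative_eq_intros)
    moreover have "(0 - (-(g - 2) / 2) * (1 + u) powr (-(g - 2) / 2 - 1) * 1) / (g - 2) = (1 + u) powr (-(g / 2)) / 2"
      using 3 by (simp add: field_simps)
    ultimately show ?thesis by metis
  qed
qed

lemma herding_potential_nonneg:
  assumes "u \<ge> 0"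
  shows "herding_potential g u \<ge> 0"
proof -
  have "herding_potential g 0 \<le> herding_potential g u"
  proof (rule DERIV_nonneg_imp_nondecreasing[OF assms])
    fix y :: real assume "0 \<le> y"
    then show "\<exists>d. (herding_potential g has_real_derivative d) (at y) \<and> d \<ge> 0"
      using herding_potential_has_derivative[of y g] by force
  qed
  then show ?thesis by simp
qed

lemma herding_potential_le_half:
  assumes "g > 0" "u \<ge> 0"
  shows "herding_potential g u \<le> u / 2"
proof -
  have "(\<lambda>u. u / 2 - herding_potential g u) 0 \<le> (\<lambda>u. u / 2 - herding_potential g u) u"
  proof (rule DERIV_nonneg_imp_nondecreasing[OF assms(2)])
    fix y :: real assume y: "0 \<le> y"
    have "((\<lambda>u. u / 2 - herding_potential g u) has_real_derivative
        1 / 2 - (1 + y) powr (-(g / 2)) / 2) (at y)"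
      using herding_potential_has_derivative[of y g] y by (auto intro!: derivative_eq_intros)
    moreover have "(1 + y) powr (-(g / 2)) \<le> 1"
      using y assms(1) ge_one_powr_ge_zero[of "1 + y" "g / 2"] by (simp add: powr_minus_divide)
    ultimately show "\<exists>d. ((\<lambda>u. u / 2 - herding_potential g u) has_real_derivative d) (at y) \<and> d \<ge> 0"
      by force
  qed
  then show ?thesis by simp
qed

lemma sum_sum_symmetric_weight_inner:
  fixes c :: "nat \<Rightarrow> nat \<Rightarrow> real" and y w :: "nat \<Rightarrow> 'a::real_inner"
  assumes "\<And>i j. c i j = c j i"
  shows "(\<Sum>i<N. \<Sum>j<N. c i j * ((y j - y i) \<bullet> w i))
       = -(1/2) * (\<Sum>i<N. \<Sum>j<N. c i j * ((y j - y i) \<bullet> (w j - w i)))"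
proof -
  let ?A = "\<Sum>i<N. \<Sum>j<N. c i j * ((y j - y i) \<bullet> w i)"
  have "?A = (\<Sum>i<N. \<Sum>j<N. c j i * ((y i - y j) \<bullet> w j))"
    by (rule sum.swap)
  also have "\<dots> = (\<Sum>i<N. \<Sum>j<N. - (c i j * ((y j - y i) \<bullet> w j)))"
    by (intro sum.cong refl) (metis assms inner_minus_left minus_diff_eq mult_minus_right)
  finally have "?A + ?A = (\<Sum>i<N. \<Sum>j<N. c i j * ((y j - y i) \<bullet> w i) - c i j * ((y j - y i) \<bullet> w j))"
    by (simp add: sum_subtractf sum_negf)
  also have "\<dots> = - (\<Sum>i<N. \<Sum>j<N. c i j * ((y j - y i) \<bullet> (w j - w i)))"
    by (simp add: sum_negf[symmetric] inner_diff_right algebra_simps)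
  finally show ?thesis by simp
qed

lemma sum_sum_symmetric_weight_scaleR_diff:
  fixes c :: "nat \<Rightarrow> nat \<Rightarrow> real" and y :: "nat \<Rightarrow> 'a::real_vector"
  assumes "\<And>i j. c i j = c j i"
  shows "(\<Sum>i<N. \<Sum>j<N. c i j *\<^sub>R (y j - y i)) = 0"
proof -
  let ?A = "\<Sum>i<N. \<Sum>j<N. c i j *\<^sub>R (y j - y i)"
  have "?A = (\<Sum>i<N. \<Sum>j<N. c j i *\<^sub>R (y i - y j))"
    by (rule sum.swap)
  also have "\<dots> = (\<Sum>i<N. \<Sum>j<N. - (c i j *\<^sub>R (y j - y i)))"
    by (intro sum.cong refl) (metis assms minus_diff_eq scaleR_minus_right)
  also have "\<dots> = - ?A" by (simp add: sum_negf)
  finally have "(2::real) *\<^sub>R ?A = 0"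
    by (simp add: scaleR_2 eq_neg_iff_add_eq_0)
  then show ?thesis by simp
qed

lemma sum_sum_norm_diff_power2:
  fixes y :: "nat \<Rightarrow> 'a::real_inner"
  assumes "(\<Sum>i<N. y i) = 0"
  shows "(\<Sum>i<N. \<Sum>j<N. (norm (y j - y i))\<^sup>2) = 2 * real N * (\<Sum>i<N. (norm (y i))\<^sup>2)"
proof -
  have "(\<Sum>j<N. y j \<bullet> y i) = 0" for i
    by (simp add: inner_sum_left[symmetric] assms)
  then show ?thesis
    by (simp add: power2_norm_eq_inner inner_diff_left inner_diff_right inner_commute
        sum.distrib sum_subtractf sum_distrib_left[symmetric] sum_distrib_right[symmetric])
qed

lemma neg_inner_le_weighted_squares:
  fixes a b :: "'a::real_inner"
  assumes "\<delta> > 0"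
  shows "-(a \<bullet> b) \<le> (\<delta> * (norm b)\<^sup>2 + (norm a)\<^sup>2 / \<delta>) / 2"
proof -
  have "0 \<le> (\<delta> *\<^sub>R b + a) \<bullet> (\<delta> *\<^sub>R b + a)" by simp
  also have "\<dots> = \<delta>\<^sup>2 * (b \<bullet> b) + 2 * \<delta> * (a \<bullet> b) + a \<bullet> a"
    by (simp add: inner_add_left inner_add_right inner_commute[of b a] power2_eq_square algebra_simps)
  also have "\<dots> = \<delta>\<^sup>2 * (norm b)\<^sup>2 + 2 * \<delta> * (a \<bullet> b) + (norm a)\<^sup>2"
    by (simp add: power2_norm_eq_inner)
  also have "\<dots> = 2 * \<delta> * ((\<delta> * (norm b)\<^sup>2 + (norm a)\<^sup>2 / \<delta>) / 2 + a \<bullet> b)"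
    using assms by (simp add: field_simps power2_eq_square)
  finally have "0 \<le> (\<delta> * (norm b)\<^sup>2 + (norm a)\<^sup>2 / \<delta>) / 2 + a \<bullet> b"
    using assms by (simp add: zero_le_mult_iff)
  then show ?thesis by linarith
qed

lemma abs_inner_le_half_squares:
  fixes a b :: "'a::real_inner"
  shows "\<bar>a \<bullet> b\<bar> \<le> ((norm a)\<^sup>2 + (norm b)\<^sup>2) / 2"
proof -
  have "\<bar>a \<bullet> b\<bar> \<le> norm a * norm b" by (rule Cauchy_Schwarz_ineq2)
  also have "\<dots> \<le> ((norm a)\<^sup>2 + (norm b)\<^sup>2) / 2"
    using zero_le_power2[of "norm a - norm b"] by (simp add: power2_diff field_simps)
  finally show ?thesis .
qed

lemma has_real_derivative_inner:
  fixes f g :: "real \<Rightarrow> 'a::real_inner"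
  assumes "(f has_vector_derivative f') (at t within S)" "(g has_vector_derivative g') (at t within S)"
  shows "((\<lambda>s. f s \<bullet> g s) has_real_derivative f t \<bullet> g' + f' \<bullet> g t) (at t within S)"
  using bounded_bilinear.has_vector_derivative[OF bounded_bilinear_inner assms]
  by (simp add: has_real_derivative_iff_has_vector_derivative)

lemma has_real_derivative_power2_norm:
  fixes f :: "real \<Rightarrow> 'a::real_inner"
  assumes "(f has_vector_derivative f') (at t within S)"
  shows "((\<lambda>s. (norm (f s))\<^sup>2) has_real_derivative 2 * (f t \<bullet> f')) (at t within S)"
  using has_real_derivative_inner[OF assms assms]
  by (simp add: power2_norm_eq_inner inner_commute)

lemma nonincreasing_if_deriv_nonpos:
  fixes f f' :: "real \<Rightarrow> real"
  assumes deriv: "\<And>t. t \<ge> 0 \<Longrightarrow> (f has_real_derivative f' t) (at t within {0..})"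
    and nonpos: "\<And>t. t \<ge> 0 \<Longrightarrow> f' t \<le> 0" and "0 \<le> s" "s \<le> t"
  shows "f t \<le> f s"
proof (cases "s = t")
  case False
  then have st: "s < t" using assms by simp
  have "\<exists>z\<in>{s<..<t}. f t - f s = (\<lambda>h. f' z * h) (t - s)"
  proof (rule mvt_simple[OF st])
    fix z assume z: "s \<le> z" "z \<le> t"
    have "(f has_real_derivative f' z) (at z within {s..t})"
      by (rule DERIV_subset[OF deriv]) (use z assms(3) in auto)
    then show "(f has_derivative (\<lambda>h. f' z * h)) (at z within {s..t})"
      by (simp add: has_field_derivative_def)
  qed
  then obtain z where "z \<in> {s<..<t}" "f t - f s = (t - s) * f' z"
    by (auto simp: mult.commute)
  moreover have "(t - s) * f' z \<le> 0" if "z \<ge> 0"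
    using nonpos[OF that] st by (simp add: mult_nonneg_nonpos)
  ultimately show ?thesis using assms(3) by auto
qed simp

(* Gronwall: F t * exp (k t) is nonincreasing. *)
lemma exp_decay_if_deriv_le:
  fixes F F' :: "real \<Rightarrow> real"
  assumes deriv: "\<And>t. t \<ge> 0 \<Longrightarrow> (F has_real_derivative F' t) (at t within {0..})"
    and decay: "\<And>t. t \<ge> 0 \<Longrightarrow> F' t \<le> - k * F t" and "t \<ge> 0"
  shows "F t \<le> F 0 * exp (- (k * t))"
proof -
  have "((\<lambda>s. F s * exp (k * s)) has_real_derivative
      F' s * exp (k * s) + exp (k * s) * (k * 1) * F s) (at s within {0..})" if "s \<ge> 0" for s
    by (rule DERIV_mult[OF deriv[OF that] DERIV_chain2[OF DERIV_exp DERIV_cmult[OF DERIV_ident]]])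
  moreover have "F' s * exp (k * s) + exp (k * s) * (k * 1) * F s \<le> 0" if "s \<ge> 0" for s
    using mult_right_mono[OF decay[OF that], of "exp (k * s)"] by (simp add: algebra_simps)
  ultimately have "F t * exp (k * t) \<le> F 0 * exp (k * 0)"
    by (rule nonincreasing_if_deriv_nonpos) (use assms(3) in auto)
  then show ?thesis by (simp add: exp_minus field_simps)
qed

locale herding_flow =
  fixes N :: nat and \<gamma> lx lv lw :: real
    and x v :: "real \<Rightarrow> nat \<Rightarrow> real^'m"
  assumes N_pos: "N \<ge> 1" and \<gamma>_pos: "\<gamma> > 0"
    and lx_pos: "lx > 0" and lv_pos: "lv > 0" and lw_pos: "lw > 0"
    and dx: "\<And>t i. t \<ge> 0 \<Longrightarrow> i < N \<Longrightarrow>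
              ((\<lambda>s. x s i) has_vector_derivative v t i) (at t within {0..})"
    and dv: "\<And>t i. t \<ge> 0 \<Longrightarrow> i < N \<Longrightarrow>
              ((\<lambda>s. v s i) has_vector_derivative
                 ((lx / real N) *\<^sub>R (\<Sum>j<N. phi_hat \<gamma> (x t i) (x t j) *\<^sub>R (x t j - x t i))
                + (lv / real N) *\<^sub>R (\<Sum>j<N. phi_hat \<gamma> (x t i) (x t j) *\<^sub>R (v t j - v t i))
                - lw *\<^sub>R x t i)) (at t within {0..})"
    and x0: "(\<Sum>i<N. x 0 i) = 0" and v0: "(\<Sum>i<N. v 0 i) = 0"
begin

definition weight :: "real \<Rightarrow> nat \<Rightarrow> nat \<Rightarrow> real" where
  "weight t i j = phi_hat \<gamma> (x t i) (x t j)"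

definition accel :: "real \<Rightarrow> nat \<Rightarrow> real^'m" where
  "accel t i = (lx / real N) *\<^sub>R (\<Sum>j<N. weight t i j *\<^sub>R (x t j - x t i))
     + (lv / real N) *\<^sub>R (\<Sum>j<N. weight t i j *\<^sub>R (v t j - v t i)) - lw *\<^sub>R x t i"

definition vel_dissipation :: "real \<Rightarrow> real" where
  "vel_dissipation t = (\<Sum>i<N. \<Sum>j<N. weight t i j * (norm (v t j - v t i))\<^sup>2)"

definition pos_dissipation :: "real \<Rightarrow> real" where
  "pos_dissipation t = (\<Sum>i<N. \<Sum>j<N. weight t i j * (norm (x t j - x t i))\<^sup>2)"

definition potential_energy :: "real \<Rightarrow> real" where
  "potential_energy t = lx / real N * (\<Sum>i<N. \<Sum>j<N. herding_potential \<gamma> ((norm (x t i - x t j))\<^sup>2))"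

definition energy :: "real \<Rightarrow> real" where
  "energy t = herding_energy lw lx \<gamma> N (x t) (v t)"

definition cross :: "real \<Rightarrow> real" where
  "cross t = (\<Sum>i<N. x t i \<bullet> v t i)"

lemma N_real_pos: "real N > 0"
  using N_pos by simp

lemma dv_accel: "t \<ge> 0 \<Longrightarrow> i < N \<Longrightarrow> ((\<lambda>s. v s i) has_vector_derivative accel t i) (at t within {0..})"
  using dv unfolding accel_def weight_def by blast

lemma weight_sym: "weight t i j = weight t j i"
  by (simp add: weight_def phi_hat_def norm_minus_commute)

lemma weight_eq: "weight t i j = (1 + (norm (x t i - x t j))\<^sup>2) powr (-(\<gamma> / 2))"
  by (simp add: weight_def phi_hat_def)

lemma weight_pos: "weight t i j > 0"
  unfolding weight_eq by (smt (verit) powr_gt_zero zero_le_power2)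

lemma vel_dissipation_nonneg: "vel_dissipation t \<ge> 0"
  unfolding vel_dissipation_def using weight_pos by (intro sum_nonneg mult_nonneg_nonneg) (auto intro: less_imp_le)

lemma potential_energy_nonneg: "potential_energy t \<ge> 0"
  unfolding potential_energy_def using lx_pos N_real_pos herding_potential_nonneg
  by (intro mult_nonneg_nonneg sum_nonneg) auto

lemma X_of_nonneg: "X_of N y \<ge> 0"
  by (simp add: X_of_def sum_nonneg)

lemma energy_eq: "energy t = lw * X_of N (x t) + X_of N (v t) + potential_energy t"
proof -
  let ?u = "\<lambda>i j. (norm (x t i - x t j))\<^sup>2"
  consider "\<gamma> < 2" | "\<gamma> = 2" | "\<gamma> > 2" by linarith
  then show ?thesis
  proof cases
    case 1
    then have "(\<Sum>i<N. \<Sum>j<N. herding_potential \<gamma> (?u i j))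
        = (\<Sum>i<N. \<Sum>j<N. (1 + ?u i j) powr (-(\<gamma> - 2) / 2) - 1) / (2 - \<gamma>)"
      by (simp add: herding_potential_def sum_divide_distrib minus_diff_eq)
    then show ?thesis
      using 1 by (simp add: energy_def herding_energy_def S_gamma_def beta_gamma_def potential_energy_def)
  next
    case 2
    then have "(\<Sum>i<N. \<Sum>j<N. ln (1 + ?u i j)) = 2 * (\<Sum>i<N. \<Sum>j<N. herding_potential \<gamma> (?u i j))"
      by (simp add: herding_potential_def sum_distrib_left)
    then show ?thesis
      unfolding energy_def herding_energy_def S_gamma_def beta_gamma_def potential_energy_def
      using 2 by simp
  next
    case 3
    then have "(\<Sum>i<N. \<Sum>j<N. herding_potential \<gamma> (?u i j))
        = (\<Sum>i<N. \<Sum>j<N. 1 - (1 + ?u i j) powr (-(\<gamma> - 2) / 2)) / (\<gamma> - 2)"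
      by (simp add: herding_potential_def sum_divide_distrib)
    then show ?thesis
      using 3 by (simp add: energy_def herding_energy_def S_gamma_def beta_gamma_def potential_energy_def)
  qed
qed

lemma energy_ge: "lw * X_of N (x t) + X_of N (v t) \<le> energy t"
  using energy_eq potential_energy_nonneg by simp

lemma energy_nonneg: "energy t \<ge> 0"
  using energy_ge[of t] X_of_nonneg[of "v t"] mult_nonneg_nonneg[OF less_imp_le[OF lw_pos] X_of_nonneg[of "x t"]]
  by linarith

lemma sum_inner_accel:
  "(\<Sum>i<N. w i \<bullet> accel t i) =
     lx / real N * (\<Sum>i<N. \<Sum>j<N. weight t i j * ((x t j - x t i) \<bullet> w i))
   + lv / real N * (\<Sum>i<N. \<Sum>j<N. weight t i j * ((v t j - v t i) \<bullet> w i))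
   - lw * (\<Sum>i<N. x t i \<bullet> w i)"
  by (simp add: accel_def inner_add_right inner_diff_right inner_sum_right sum.distrib sum_subtractf
      sum_distrib_left inner_commute)

lemma sum_accel: "(\<Sum>i<N. accel t i) = - lw *\<^sub>R (\<Sum>i<N. x t i)"
  using sum_sum_symmetric_weight_scaleR_diff[of "weight t" "x t", OF weight_sym]
    sum_sum_symmetric_weight_scaleR_diff[of "weight t" "v t", OF weight_sym]
  by (simp add: accel_def sum.distrib sum_subtractf scaleR_sum_right[symmetric])

(* The centres of mass obey x' = v, v' = -lw x, which conserves lw |x|^2 + |v|^2. *)
lemma centre_of_mass_zero:
  assumes "t \<ge> 0"
  shows "(\<Sum>i<N. x t i) = 0" "(\<Sum>i<N. v t i) = 0"
proof -
  define H where "H s = lw * (norm (\<Sum>i<N. x s i))\<^sup>2 + (norm (\<Sum>i<N. v s i))\<^sup>2" for s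
  have "(H has_real_derivative 0) (at s within {0..})" if "s \<ge> 0" for s
  proof -
    have "(H has_real_derivative lw * (2 * ((\<Sum>i<N. x s i) \<bullet> (\<Sum>i<N. v s i)))
        + 2 * ((\<Sum>i<N. v s i) \<bullet> (\<Sum>i<N. accel s i))) (at s within {0..})"
      unfolding H_def
      by (intro DERIV_add DERIV_cmult has_real_derivative_power2_norm has_vector_derivative_sum
          dx[OF that] dv_accel[OF that]) auto
    then show ?thesis by (simp add: sum_accel inner_commute)
  qed
  then obtain c where "\<And>s. s \<in> {0..} \<Longrightarrow> H s = c"
    using has_field_derivative_zero_constant[of "{0..}" H] by auto
  moreover have "H 0 = 0"
    by (simp add: H_def x0 v0)
  ultimately have "lw * (norm (\<Sum>i<N. x t i))\<^sup>2 + (norm (\<Sum>i<N. v t i))\<^sup>2 = 0"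
    using assms unfolding H_def by force
  moreover have "lw * (norm (\<Sum>i<N. x t i))\<^sup>2 \<ge> 0"
    using lw_pos by simp
  ultimately have "lw * (norm (\<Sum>i<N. x t i))\<^sup>2 = 0" "(norm (\<Sum>i<N. v t i))\<^sup>2 = 0"
    using zero_le_power2[of "norm (\<Sum>i<N. v t i)"] by linarith+
  then show "(\<Sum>i<N. x t i) = 0" "(\<Sum>i<N. v t i) = 0"
    using lw_pos by auto
qed

lemma potential_energy_has_derivative:
  assumes "t \<ge> 0"
  shows "(potential_energy has_real_derivative
      lx / real N * (\<Sum>i<N. \<Sum>j<N. weight t i j * ((x t i - x t j) \<bullet> (v t i - v t j)))) (at t within {0..})"
  unfolding potential_energy_def
proof (intro DERIV_cmult DERIV_sum)
  fix i j assume ij: "i \<in> {..<N}" "j \<in> {..<N}"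
  have "((\<lambda>s. x s i - x s j) has_vector_derivative v t i - v t j) (at t within {0..})"
    using dx[OF assms] ij by (auto intro!: derivative_intros)
  moreover have "-1 < (norm (x t i - x t j))\<^sup>2"
    by (smt (verit) zero_le_power2)
  ultimately have "((\<lambda>s. herding_potential \<gamma> ((norm (x s i - x s j))\<^sup>2)) has_real_derivative
      (1 + (norm (x t i - x t j))\<^sup>2) powr (-(\<gamma> / 2)) / 2 * (2 * ((x t i - x t j) \<bullet> (v t i - v t j))))
      (at t within {0..})"
    by (intro DERIV_chain2[OF herding_potential_has_derivative has_real_derivative_power2_norm])
  then show "((\<lambda>s. herding_potential \<gamma> ((norm (x s i - x s j))\<^sup>2)) has_real_derivative
      weight t i j * ((x t i - x t j) \<bullet> (v t i - v t j))) (at t within {0..})"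
    by (simp add: weight_eq)
qed

lemma energy_has_derivative:
  assumes "t \<ge> 0"
  shows "(energy has_real_derivative - (lv / real N * vel_dissipation t)) (at t within {0..})"
proof -
  let ?A = "\<Sum>i<N. \<Sum>j<N. weight t i j * ((x t j - x t i) \<bullet> (v t j - v t i))"
  have "((\<lambda>s. lw * X_of N (x s) + X_of N (v s) + potential_energy s) has_real_derivative
      lw * (\<Sum>i<N. 2 * (x t i \<bullet> v t i)) + (\<Sum>i<N. 2 * (v t i \<bullet> accel t i))
      + lx / real N * (\<Sum>i<N. \<Sum>j<N. weight t i j * ((x t i - x t j) \<bullet> (v t i - v t j))))
      (at t within {0..})"
    unfolding X_of_def
    by (intro DERIV_add DERIV_cmult DERIV_sum potential_energy_has_derivative[OF assms]
        has_real_derivative_power2_norm dx[OF assms] dv_accel[OF assms]) auto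
  moreover have "(x t i - x t j) \<bullet> (v t i - v t j) = (x t j - x t i) \<bullet> (v t j - v t i)" for i j
    by (simp add: inner_diff_left inner_diff_right)
  moreover have "(\<Sum>i<N. v t i \<bullet> accel t i) =
      lx / real N * (-(1/2) * ?A) + lv / real N * (-(1/2) * vel_dissipation t) - lw * (\<Sum>i<N. x t i \<bullet> v t i)"
    unfolding sum_inner_accel sum_sum_symmetric_weight_inner[of "weight t", OF weight_sym]
    by (simp add: vel_dissipation_def power2_norm_eq_inner)
  ultimately show ?thesis
    unfolding energy_eq[abs_def] by (simp add: sum_distrib_left[symmetric] algebra_simps)
qed

lemma energy_antimono:
  assumes "0 \<le> s" "s \<le> t"
  shows "energy t \<le> energy s"
  using nonincreasing_if_deriv_nonpos[OF energy_has_derivative _ assms] vel_dissipation_nonneg lv_pos N_real_pos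
  by simp


definition diam_bound :: real where
  "diam_bound = 4 * energy 0 / lw"

definition weight_lb :: real where
  "weight_lb = (1 + diam_bound) powr (-(\<gamma> / 2))"

lemma diam_bound_nonneg: "diam_bound \<ge> 0"
  unfolding diam_bound_def using energy_nonneg lw_pos by simp

lemma weight_lb_pos: "weight_lb > 0"
  using diam_bound_nonneg by (simp add: weight_lb_def)

lemma weight_lb_le_1: "weight_lb \<le> 1"
  unfolding weight_lb_def using diam_bound_nonneg \<gamma>_pos ge_one_powr_ge_zero[of "1 + diam_bound" "\<gamma> / 2"]
  by (simp add: powr_minus_divide)

lemma dist_power2_le_diam_bound:
  assumes "t \<ge> 0" "i < N" "j < N"
  shows "(norm (x t i - x t j))\<^sup>2 \<le> diam_bound"
proof -
  have single: "(norm (x t k))\<^sup>2 \<le> X_of N (x t)" if "k < N" for k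
    unfolding X_of_def using that by (intro member_le_sum) auto
  have "lw * X_of N (x t) \<le> energy 0"
    using energy_ge[of t] energy_antimono[OF order_refl assms(1)] X_of_nonneg[of "v t"] by simp
  then have X: "4 * X_of N (x t) \<le> diam_bound"
    using lw_pos by (simp add: diam_bound_def field_simps)
  have "(norm (x t i - x t j))\<^sup>2 \<le> (norm (x t i) + norm (x t j))\<^sup>2"
    by (simp add: power_mono norm_triangle_ineq4)
  also have "\<dots> \<le> 2 * ((norm (x t i))\<^sup>2 + (norm (x t j))\<^sup>2)"
    using zero_le_power2[of "norm (x t i) - norm (x t j)"] by (simp add: power2_diff power2_sum)
  also have "\<dots> \<le> 4 * X_of N (x t)"
    using single[OF assms(2)] single[OF assms(3)] by simp
  finally show ?thesis using X by linarith
qed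

lemma weight_ge_lb:
  assumes "t \<ge> 0" "i < N" "j < N"
  shows "weight t i j \<ge> weight_lb"
  unfolding weight_eq weight_lb_def
  by (rule powr_mono2') (use \<gamma>_pos dist_power2_le_diam_bound[OF assms] in \<open>auto intro: add_pos_nonneg\<close>)

lemma vel_dissipation_ge:
  assumes "t \<ge> 0"
  shows "2 * real N * weight_lb * X_of N (v t) \<le> vel_dissipation t"
proof -
  have "2 * real N * weight_lb * X_of N (v t) = (\<Sum>i<N. \<Sum>j<N. weight_lb * (norm (v t j - v t i))\<^sup>2)"
    using sum_sum_norm_diff_power2[OF centre_of_mass_zero(2)[OF assms]]
    by (simp add: X_of_def sum_distrib_left[symmetric] algebra_simps)
  also have "\<dots> \<le> vel_dissipation t"
    unfolding vel_dissipation_def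
    by (intro sum_mono mult_right_mono) (auto intro: weight_ge_lb[OF assms])
  finally show ?thesis .
qed

lemma potential_energy_le:
  assumes "t \<ge> 0"
  shows "potential_energy t \<le> lx / (2 * real N * weight_lb) * pos_dissipation t"
proof -
  have "(\<Sum>i<N. \<Sum>j<N. herding_potential \<gamma> ((norm (x t i - x t j))\<^sup>2))
      \<le> (\<Sum>i<N. \<Sum>j<N. weight t i j * (norm (x t j - x t i))\<^sup>2 / (2 * weight_lb))"
  proof (intro sum_mono)
    fix i j assume "i \<in> {..<N}" "j \<in> {..<N}"
    then have lb: "weight_lb \<le> weight t i j"
      using weight_ge_lb[OF assms] by simp
    let ?u = "(norm (x t j - x t i))\<^sup>2"
    have "herding_potential \<gamma> ?u \<le> weight_lb * ?u / (2 * weight_lb)"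
      using herding_potential_le_half[OF \<gamma>_pos] weight_lb_pos by simp
    also have "\<dots> \<le> weight t i j * ?u / (2 * weight_lb)"
      by (intro divide_right_mono mult_right_mono lb) (use weight_lb_pos in auto)
    finally show "herding_potential \<gamma> ((norm (x t i - x t j))\<^sup>2) \<le> weight t i j * ?u / (2 * weight_lb)"
      by (simp add: norm_minus_commute)
  qed
  also have "\<dots> = pos_dissipation t / (2 * weight_lb)"
    by (simp add: pos_dissipation_def sum_divide_distrib)
  finally have "lx / real N * (\<Sum>i<N. \<Sum>j<N. herding_potential \<gamma> ((norm (x t i - x t j))\<^sup>2))
      \<le> lx / real N * (pos_dissipation t / (2 * weight_lb))"
    using lx_pos N_real_pos by (intro mult_left_mono) auto
  then show ?thesis
    by (simp add: potential_energy_def field_simps)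
qed

lemma abs_cross_le: "\<bar>cross t\<bar> \<le> (X_of N (x t) + X_of N (v t)) / 2"
proof -
  have "\<bar>cross t\<bar> \<le> (\<Sum>i<N. \<bar>x t i \<bullet> v t i\<bar>)"
    unfolding cross_def by (rule sum_abs)
  also have "\<dots> \<le> (\<Sum>i<N. ((norm (x t i))\<^sup>2 + (norm (v t i))\<^sup>2) / 2)"
    by (intro sum_mono abs_inner_le_half_squares)
  also have "\<dots> = (X_of N (x t) + X_of N (v t)) / 2"
    by (simp add: X_of_def sum.distrib sum_divide_distrib[symmetric])
  finally show ?thesis .
qed

lemma cross_has_derivative:
  assumes "t \<ge> 0"
  shows "(cross has_real_derivative (\<Sum>i<N. x t i \<bullet> accel t i) + X_of N (v t)) (at t within {0..})"
proof -
  have "(cross has_real_derivative (\<Sum>i<N. x t i \<bullet> accel t i + v t i \<bullet> v t i)) (at t within {0..})"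
    unfolding cross_def[abs_def]
    by (intro DERIV_sum has_real_derivative_inner dx[OF assms] dv_accel[OF assms]) auto
  then show ?thesis
    by (simp add: sum.distrib X_of_def power2_norm_eq_inner)
qed

(* The velocity coupling in the derivative of the cross term is split by Young's inequality
   with weight lx/lv, so that half of the position alignment survives. *)
lemma cross_derivative_le:
  "(\<Sum>i<N. x t i \<bullet> accel t i) + X_of N (v t)
     \<le> X_of N (v t) - lx / (4 * real N) * pos_dissipation t
       + lv\<^sup>2 / (4 * lx * real N) * vel_dissipation t - lw * X_of N (x t)"
proof -
  define C where "C = (\<Sum>i<N. \<Sum>j<N. weight t i j * ((v t j - v t i) \<bullet> (x t j - x t i)))"
  define \<delta> where "\<delta> = lx / lv"
  have \<delta>_pos: "\<delta> > 0" using lx_pos lv_pos by (simp add: \<delta>_def)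
  have "-(1/2) * C = (\<Sum>i<N. \<Sum>j<N. weight t i j * (-((v t j - v t i) \<bullet> (x t j - x t i)))) / 2"
    by (simp add: C_def sum_negf)
  also have "\<dots> \<le> (\<Sum>i<N. \<Sum>j<N. weight t i j *
      ((\<delta> * (norm (x t j - x t i))\<^sup>2 + (norm (v t j - v t i))\<^sup>2 / \<delta>) / 2)) / 2"
    by (intro divide_right_mono sum_mono mult_left_mono neg_inner_le_weighted_squares \<delta>_pos)
      (auto intro: less_imp_le weight_pos)
  also have "\<dots> = (\<delta> * pos_dissipation t + vel_dissipation t / \<delta>) / 4"
    by (simp add: pos_dissipation_def vel_dissipation_def sum_divide_distrib sum_distrib_left
        sum.distrib algebra_simps add_divide_distrib)
  finally have "lv / real N * (-(1/2) * C) \<le> lv / real N * ((\<delta> * pos_dissipation t + vel_dissipation t / \<delta>) / 4)"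
    using lv_pos N_real_pos by (intro mult_left_mono) auto
  also have "\<dots> = lx / (4 * real N) * pos_dissipation t + lv\<^sup>2 / (4 * lx * real N) * vel_dissipation t"
    using lx_pos lv_pos N_real_pos by (simp add: \<delta>_def field_simps power2_eq_square)
  finally have young: "lv / real N * (-(1/2) * C)
      \<le> lx / (4 * real N) * pos_dissipation t + lv\<^sup>2 / (4 * lx * real N) * vel_dissipation t" .
  have "(\<Sum>i<N. x t i \<bullet> accel t i)
      = lx / real N * (-(1/2) * pos_dissipation t) + lv / real N * (-(1/2) * C) - lw * X_of N (x t)"
    unfolding sum_inner_accel sum_sum_symmetric_weight_inner[of "weight t", OF weight_sym]
    by (simp add: C_def pos_dissipation_def X_of_def power2_norm_eq_inner)
  also have "\<dots> = -(2 * (lx / (4 * real N) * pos_dissipation t)) + lv / real N * (-(1/2) * C)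
      - lw * X_of N (x t)"
    by (simp add: field_simps)
  finally show ?thesis
    using young by linarith
qed


definition eps :: real where
  "eps = min (min 1 lw) (min (2 * lx / lv) (lv * weight_lb / 2))"

definition lyapunov :: "real \<Rightarrow> real" where
  "lyapunov t = energy t + eps * cross t"

lemma eps_pos: "eps > 0"
  using lw_pos lx_pos lv_pos weight_lb_pos by (simp add: eps_def)

lemma eps_le: "eps \<le> 1" "eps \<le> lw" "eps \<le> 2 * lx / lv" "eps \<le> lv * weight_lb / 2"
  by (auto simp: eps_def)

lemma lyapunov_ge: "energy t / 2 \<le> lyapunov t"
  and lyapunov_le: "lyapunov t \<le> 3/2 * energy t"
proof -
  have "\<bar>eps * cross t\<bar> \<le> eps * ((X_of N (x t) + X_of N (v t)) / 2)"
    using abs_cross_le[of t] eps_pos by (simp add: abs_mult)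
  moreover have "eps * X_of N (x t) \<le> lw * X_of N (x t)"
    using eps_le(2) X_of_nonneg by (intro mult_right_mono) auto
  moreover have "eps * X_of N (v t) \<le> X_of N (v t)"
    using mult_right_mono[OF eps_le(1) X_of_nonneg[of "v t"]] by simp
  ultimately have "\<bar>eps * cross t\<bar> \<le> energy t / 2"
    using energy_ge[of t] by (simp add: algebra_simps)
  then show "energy t / 2 \<le> lyapunov t" "lyapunov t \<le> 3/2 * energy t"
    unfolding lyapunov_def by linarith+
qed

lemma lyapunov_has_derivative:
  assumes "t \<ge> 0"
  shows "(lyapunov has_real_derivative
      - (lv / real N * vel_dissipation t) + eps * ((\<Sum>i<N. x t i \<bullet> accel t i) + X_of N (v t)))
      (at t within {0..})"
  unfolding lyapunov_def[abs_def]
  by (intro DERIV_add DERIV_cmult energy_has_derivative[OF assms] cross_has_derivative[OF assms])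

(* Half of the velocity dissipation pays for the Young remainder (eps \<le> 2 lx/lv), the other half
   for the kinetic term (eps \<le> lv m/2); the position dissipation controls the potential energy. *)
lemma lyapunov_derivative_le:
  assumes "t \<ge> 0"
  shows "- (lv / real N * vel_dissipation t) + eps * ((\<Sum>i<N. x t i \<bullet> accel t i) + X_of N (v t))
    \<le> - (eps * weight_lb / 2) * energy t"
proof -
  define m where "m = weight_lb"
  define n where "n = real N"
  define A where "A = (\<Sum>i<N. x t i \<bullet> accel t i)"
  define V where "V = X_of N (v t)"
  define X where "X = X_of N (x t)"
  define Q where "Q = pos_dissipation t"
  define D where "D = vel_dissipation t"
  define S where "S = potential_energy t"
  note defs = m_def n_def A_def V_def X_def Q_def D_def S_def
  have n_pos: "n > 0" and m_pos: "m > 0" and m_le_1: "m \<le> 1"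
    using N_real_pos weight_lb_pos weight_lb_le_1 by (simp_all add: defs)
  have "eps * (A + V) \<le> eps * (V - lx / (4 * n) * Q + lv\<^sup>2 / (4 * lx * n) * D - lw * X)"
    using cross_derivative_le[of t] eps_pos by (intro mult_left_mono) (auto simp: defs)
  then have cross_le: "eps * (A + V)
      \<le> eps * V - eps * (lx / (4 * n) * Q) + eps * (lv\<^sup>2 / (4 * lx * n)) * D - eps * (lw * X)"
    by (simp add: algebra_simps)
  have "eps * (lv\<^sup>2 / (4 * lx * n)) \<le> (2 * lx / lv) * (lv\<^sup>2 / (4 * lx * n))"
    using eps_le(3) lx_pos lv_pos n_pos by (intro mult_right_mono) auto
  also have "\<dots> = lv / (2 * n)"
    using lx_pos lv_pos n_pos by (simp add: field_simps power2_eq_square)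
  finally have young_part: "eps * (lv\<^sup>2 / (4 * lx * n)) * D \<le> lv / (2 * n) * D"
    using vel_dissipation_nonneg by (intro mult_right_mono) (auto simp: D_def)
  have "lv / (2 * n) * (2 * n * m * V) \<le> lv / (2 * n) * D"
    using vel_dissipation_ge[OF assms] lv_pos n_pos by (intro mult_left_mono) (auto simp: defs)
  then have kinetic_part: "lv * m * V \<le> lv / (2 * n) * D"
    using n_pos by (simp add: field_simps)
  have "eps * m \<le> eps"
    using mult_left_mono[OF m_le_1, of eps] eps_pos by simp
  then have "eps + eps * m / 2 \<le> lv * m"
    using eps_le(4)[folded m_def] eps_pos by linarith
  then have kinetic: "eps * V + eps * m / 2 * V \<le> lv * m * V"
    using mult_right_mono[OF _ X_of_nonneg[of "v t"]] unfolding V_def distrib_right[symmetric] by blast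
  have "eps * m / 2 * S \<le> eps * m / 2 * (lx / (2 * n * m) * Q)"
    using potential_energy_le[OF assms] eps_pos m_pos by (intro mult_left_mono) (auto simp: defs)
  also have "\<dots> = eps * (lx / (4 * n) * Q)"
    using m_pos n_pos by (simp add: field_simps)
  finally have potential: "eps * m / 2 * S \<le> eps * (lx / (4 * n) * Q)" .
  have position: "eps * m / 2 * (lw * X) \<le> eps * (lw * X)"
    using mult_right_mono[OF m_le_1, of eps] eps_pos lw_pos X_of_nonneg[of "x t"]
    by (intro mult_right_mono) (auto simp: X_def)
  have "- (2 * (lv / (2 * n) * D)) + eps * (A + V) \<le> - (eps * m / 2 * (lw * X) + eps * m / 2 * V + eps * m / 2 * S)"
    using cross_le young_part kinetic_part kinetic potential position by linarith
  moreover have "lv / real N * vel_dissipation t = 2 * (lv / (2 * n) * D)"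
    using n_pos by (simp add: n_def D_def)
  moreover have "(eps * weight_lb / 2) * energy t = eps * m / 2 * (lw * X) + eps * m / 2 * V + eps * m / 2 * S"
    by (simp add: energy_eq defs algebra_simps)
  ultimately show ?thesis
    unfolding A_def V_def by linarith
qed

lemma energy_exp_decay:
  assumes "t \<ge> 0"
  shows "energy t \<le> 2 * lyapunov 0 * exp (- (eps * weight_lb / 3 * t))"
proof -
  have "lyapunov t \<le> lyapunov 0 * exp (- (eps * weight_lb / 3 * t))"
  proof (rule exp_decay_if_deriv_le[OF lyapunov_has_derivative _ assms])
    fix s :: real assume "s \<ge> 0"
    moreover have "eps * weight_lb / 3 * lyapunov s \<le> eps * weight_lb / 2 * energy s"
      using mult_left_mono[OF lyapunov_le[of s], of "eps * weight_lb / 3"] eps_pos weight_lb_pos by simp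
    ultimately show "- (lv / real N * vel_dissipation s) + eps * ((\<Sum>i<N. x s i \<bullet> accel s i) + X_of N (v s))
        \<le> - (eps * weight_lb / 3) * lyapunov s"
      using lyapunov_derivative_le[of s] by simp
  qed
  then show ?thesis
    using lyapunov_ge[of t] by simp
qed

lemma energy_tendsto_0: "(energy \<longlongrightarrow> 0) at_top"
proof (rule tendsto_sandwich)
  show "\<forall>\<^sub>F t in at_top. 0 \<le> energy t"
    using energy_nonneg by simp
  show "\<forall>\<^sub>F t in at_top. energy t \<le> 2 * lyapunov 0 * exp (- (eps * weight_lb / 3 * t))"
    using eventually_ge_at_top[of 0] by eventually_elim (rule energy_exp_decay)
  have "filterlim (\<lambda>t. eps * weight_lb / 3 * t) at_top at_top"
    by (rule filterlim_tendsto_pos_mult_at_top[OF tendsto_const _ filterlim_ident])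
      (use eps_pos weight_lb_pos in simp)
  then have "((\<lambda>t. exp (- (eps * weight_lb / 3 * t))) \<longlongrightarrow> 0) at_top"
    by (intro filterlim_compose[OF exp_at_bot]) (simp add: filterlim_uminus_at_top)
  then show "((\<lambda>t. 2 * lyapunov 0 * exp (- (eps * weight_lb / 3 * t))) \<longlongrightarrow> 0) at_top"
    by (rule tendsto_mult_right_zero)
qed simp

end

theorem theorem3p6:
  fixes N :: nat and \<gamma> lx lv lw :: real
    and x v :: "real \<Rightarrow> nat \<Rightarrow> real^'m"
  assumes "N \<ge> 1" and "\<gamma> > 0" and "lx > 0" and "lv > 0" and "lw > 0"
    and dx: "\<And>t i. t \<ge> 0 \<Longrightarrow> i < N \<Longrightarrow>
              ((\<lambda>s. x s i) has_vector_derivative v t i) (at t within {0..})"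
    and dv: "\<And>t i. t \<ge> 0 \<Longrightarrow> i < N \<Longrightarrow>
              ((\<lambda>s. v s i) has_vector_derivative
                 ((lx / real N) *\<^sub>R (\<Sum>j<N. phi_hat \<gamma> (x t i) (x t j) *\<^sub>R (x t j - x t i))
                + (lv / real N) *\<^sub>R (\<Sum>j<N. phi_hat \<gamma> (x t i) (x t j) *\<^sub>R (v t j - v t i))
                - lw *\<^sub>R x t i)) (at t within {0..})"
    and "(\<Sum>i<N. x 0 i) = 0" and "(\<Sum>i<N. v 0 i) = 0"
  shows "((\<lambda>t. herding_energy lw lx \<gamma> N (x t) (v t)) \<longlongrightarrow> 0) at_top"
proof -
  interpret herding_flow N \<gamma> lx lv lw x v
    using assms by unfold_locales auto
  show ?thesis
    using energy_tendsto_0 by (simp add: energy_def[abs_def])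
qed

end
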